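(* For every $n\ge1$, if $A(T^{mb}_n)$ denotes the number of automorphisms of $T^{mb}_n$, then $c_n=n-1-\log_2 A(T^{mb}_n)$.
   Context: Bifurcating trees: rooted trees in which every internal node has exactly two children; $\mathcal{T}_n$ is the set of isomorphism classes of bifurcating trees with $n$ leaves. For a node $w$, $\kappa_T(w)$ is its number of descendant leaves. The Colless index is $\mathcal{C}(T)=\sum_{v}|\kappa_T(v_1)-\kappa_T(v_2)|$, summed over internal nodes $v$ with children $v_1,v_2$; $c_n=\min\{\mathcal{C}(T):T\in\mathcal{T}_n\}$. $T^{mb}_n$ is the unique bifurcating tree with $n$ leaves in which, at every internal node, the numbers of descendant leaves of the two children differ by at most 1. Automorphisms are automorphisms of the rooted tree (as a directed graph). *)

theory Defs
  imports Complex_Main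
begin

text \<open>Bifurcating (rooted binary) trees. A tree value represents a rooted tree;
isomorphism classes correspond to trees modulo swapping children.\<close>
datatype btree = Leaf | Node btree btree

fun leaves :: "btree \<Rightarrow> nat" where
  "leaves Leaf = 1"
| "leaves (Node l r) = leaves l + leaves r"

fun colless :: "btree \<Rightarrow> nat" where
  "colless Leaf = 0"
| "colless (Node l r) = colless l + colless r +
     (if leaves l \<ge> leaves r then leaves l - leaves r else leaves r - leaves l)"

definition c :: "nat \<Rightarrow> nat" where
  "c n = Min {colless T | T. leaves T = n}"

fun max_balanced :: "btree \<Rightarrow> bool" where
  "max_balanced Leaf = True"
| "max_balanced (Node l r) = (max_balanced l \<and> max_balanced r \<and>
     leaves l \<le> leaves r + 1 \<and> leaves r \<le> leaves l + 1)"

fun nodes :: "btree \<Rightarrow> bool list set" where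
  "nodes Leaf = {[]}"
| "nodes (Node l r) = insert [] ((\<lambda>p. False # p) ` nodes l \<union> (\<lambda>p. True # p) ` nodes r)"

definition edge :: "btree \<Rightarrow> bool list \<Rightarrow> bool list \<Rightarrow> bool" where
  "edge T p q \<longleftrightarrow> p \<in> nodes T \<and> q \<in> nodes T \<and> (\<exists>b. q = p @ [b])"

definition automorphisms :: "btree \<Rightarrow> (bool list \<Rightarrow> bool list) set" where
  "automorphisms T = {f. bij_betw f (nodes T) (nodes T) \<and>
      (\<forall>x. x \<notin> nodes T \<longrightarrow> f x = x) \<and>
      (\<forall>p\<in>nodes T. \<forall>q\<in>nodes T. edge T p q \<longleftrightarrow> edge T (f p) (f q))}"

end

theory Submission
  imports Defs "HOL-Library.FuncSet"
begin

text \<open>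
  The maximally balanced tree with \<open>n \<ge> 2\<close> leaves has the maximally balanced trees with
  \<open>\<lfloor>n/2\<rfloor>\<close> and \<open>\<lceil>n/2\<rceil>\<close> leaves as subtrees, so its Colless index \<open>F n\<close> obeys
  \<open>F n = F \<lfloor>n/2\<rfloor> + F \<lceil>n/2\<rceil> + n mod 2\<close>. Minimality of \<open>F n\<close> among all trees with
  \<open>n\<close> leaves follows by induction on the tree from \<open>F (a + b) \<le> F a + F b + \<bar>a - b\<bar>\<close>, which is
  proved by induction on \<open>a + b\<close>, splitting \<open>a\<close> and \<open>b\<close> into halves and regrouping them.

  An isomorphism between two non-leaf trees either keeps or swaps the children of the root and is
  otherwise a pair of isomorphisms between the corresponding subtrees. Hence the maximally balanced
  tree with \<open>n\<close> leaves has \<open>2 ^ s n\<close> automorphisms, where \<open>s n\<close> counts its internal nodes with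
  an even number of descendant leaves, i.e. those whose two subtrees are isomorphic. Each of the
  \<open>n - 1\<close> internal nodes contributes \<open>1\<close> to exactly one of \<open>F n\<close> and \<open>s n\<close>, so
  \<open>F n + s n = n - 1\<close>. Below, \<open>F\<close> is \<open>mb_colless\<close> and \<open>s\<close> is \<open>mb_symmetries\<close>.
\<close>

function mb_colless :: "nat \<Rightarrow> nat" where
  "mb_colless n =
     (if n \<le> 1 then 0 else mb_colless (n div 2) + mb_colless (n - n div 2) + n mod 2)"
  by auto
termination by (relation "measure id") auto

function mb_symmetries :: "nat \<Rightarrow> nat" where
  "mb_symmetries n =
     (if n \<le> 1 then 0
      else mb_symmetries (n div 2) + mb_symmetries (n - n div 2) + (if even n then 1 else 0))"
  by auto
termination by (relation "measure id") auto

declare mb_colless.simps [simp del] mb_symmetries.simps [simp del]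

lemma mb_colless_le_1 [simp]: "n \<le> 1 \<Longrightarrow> mb_colless n = 0"
  by (simp add: mb_colless.simps)

lemma mb_symmetries_le_1 [simp]: "n \<le> 1 \<Longrightarrow> mb_symmetries n = 0"
  by (simp add: mb_symmetries.simps)

lemma mb_colless_split:
  assumes "1 \<le> x" "1 \<le> y" "x \<le> y + 1" "y \<le> x + 1"
  shows "mb_colless (x + y) =
           mb_colless x + mb_colless y + (if y \<le> x then x - y else y - x)"
proof (cases "x \<le> y")
  case True
  then have "(x + y) div 2 = x" "x + y - (x + y) div 2 = y" "(x + y) mod 2 = y - x"
    using assms by presburger+
  then show ?thesis
    using True assms mb_colless.simps[of "x + y"] by auto
next
  case False
  then have "(x + y) div 2 = y" "x + y - (x + y) div 2 = x" "(x + y) mod 2 = x - y"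
    using assms by presburger+
  then show ?thesis
    using False assms mb_colless.simps[of "x + y"] by auto
qed

lemma mb_symmetries_split:
  assumes "1 \<le> x" "1 \<le> y" "x \<le> y + 1" "y \<le> x + 1"
  shows "mb_symmetries (x + y) = mb_symmetries x + mb_symmetries y + (if x = y then 1 else 0)"
proof -
  have parity: "even (x + y) \<longleftrightarrow> x = y"
    using assms by presburger
  show ?thesis
  proof (cases "x \<le> y")
    case True
    then have "(x + y) div 2 = x" "x + y - (x + y) div 2 = y"
      using assms by presburger+
    then show ?thesis
      using assms parity mb_symmetries.simps[of "x + y"] by auto
  next
    case False
    then have "(x + y) div 2 = y" "x + y - (x + y) div 2 = x"
      using assms by presburger+
    then show ?thesis
      using assms parity mb_symmetries.simps[of "x + y"] by auto
  qed
qed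

lemma mb_colless_Suc_le:
  assumes "1 \<le> n"
  shows "mb_colless (Suc n) + 1 \<le> mb_colless n + n"
  using assms
proof (induction n rule: less_induct)
  case (less n)
  have "n = 1 \<or> (\<exists>m. 1 \<le> m \<and> n = m + m) \<or> (\<exists>m. 1 \<le> m \<and> n = Suc (m + m))"
    using less.prems by presburger
  then consider "n = 1" | m where "1 \<le> m" "n = m + m" | m where "1 \<le> m" "n = Suc (m + m)"
    by blast
  then show ?case
  proof cases
    case 1
    then show ?thesis by (simp add: mb_colless_split[of 1 1, simplified])
  next
    case (2 m)
    have "mb_colless (Suc m) + 1 \<le> mb_colless m + m"
      using less.IH 2 by simp
    moreover have "mb_colless (Suc n) = mb_colless m + mb_colless (Suc m) + 1"
      using mb_colless_split[of m "Suc m"] 2 by simp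
    moreover have "mb_colless n = mb_colless m + mb_colless m"
      using mb_colless_split[of m m] 2 by simp
    ultimately show ?thesis using 2 by simp
  next
    case (3 m)
    have "mb_colless (Suc m) + 1 \<le> mb_colless m + m"
      using less.IH 3 by simp
    moreover have "mb_colless (Suc n) = mb_colless (Suc m) + mb_colless (Suc m)"
      using mb_colless_split[of "Suc m" "Suc m"] 3 by simp
    moreover have "mb_colless n = mb_colless m + mb_colless (Suc m) + 1"
      using mb_colless_split[of m "Suc m"] 3 by simp
    ultimately show ?thesis using 3 by simp
  qed
qed

lemma mb_colless_add_le:
  "int (mb_colless (a + b)) \<le> int (mb_colless a) + int (mb_colless b) + \<bar>int a - int b\<bar>"
proof (induction "a + b" arbitrary: a b rule: less_induct)
  case less
  consider "a = 0 \<or> b = 0" | "a = 1" "1 \<le> b" | "b = 1" "1 \<le> a" | "2 \<le> a" "2 \<le> b"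
    by linarith
  then show ?case
  proof cases
    case 1
    then show ?thesis by auto
  next
    case 2
    then show ?thesis using mb_colless_Suc_le[of b] by simp
  next
    case 3
    then show ?thesis using mb_colless_Suc_le[of a] by simp
  next
    case 4
    \<comment> \<open>Pair the lower half of \<open>a\<close> with the upper half of \<open>b\<close> and vice versa: the two sums
      again differ by at most one, so they are the halves of \<open>a + b\<close>.\<close>
    define p p' q q' where "p = a div 2" "p' = a - p" "q = b div 2" "q' = b - q"
    have halves: "a = p + p'" "p \<le> p'" "p' \<le> p + 1" "b = q + q'" "q \<le> q'" "q' \<le> q + 1"
      "1 \<le> p" "1 \<le> q"
      using 4 unfolding p_p'_q_q'_def by auto
    have "int (mb_colless (p + q')) \<le> int (mb_colless p) + int (mb_colless q') + \<bar>int p - int q'\<bar>"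
      "int (mb_colless (p' + q)) \<le> int (mb_colless p') + int (mb_colless q) + \<bar>int p' - int q\<bar>"
      using less.hyps halves by auto
    moreover have "int (mb_colless (a + b)) =
        int (mb_colless (p + q')) + int (mb_colless (p' + q)) + \<bar>int (p + q') - int (p' + q)\<bar>"
      using mb_colless_split[of "p + q'" "p' + q"] halves by (simp add: algebra_simps)
    moreover have "int (mb_colless a) = int (mb_colless p) + int (mb_colless p') + (int p' - int p)"
      "int (mb_colless b) = int (mb_colless q) + int (mb_colless q') + (int q' - int q)"
      using mb_colless_split[of p p'] mb_colless_split[of q q'] halves by auto
    moreover have "\<bar>int p - int q'\<bar> + \<bar>int p' - int q\<bar> + \<bar>int (p + q') - int (p' + q)\<bar>
        \<le> (int p' - int p) + (int q' - int q) + \<bar>int a - int b\<bar>"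
      using halves by (simp add: abs_if)
    ultimately show ?thesis
      by linarith
  qed
qed

lemma mb_colless_add_mb_symmetries:
  assumes "1 \<le> n"
  shows "mb_colless n + mb_symmetries n + 1 = n"
  using assms
proof (induction n rule: less_induct)
  case (less n)
  show ?case
  proof (cases "n = 1")
    case False
    define h k where "h = n div 2" "k = n - n div 2"
    have hk: "n = h + k" "1 \<le> h" "1 \<le> k" "h \<le> k + 1" "k \<le> h + 1"
      using less.prems False unfolding h_k_def by auto
    have "mb_colless h + mb_symmetries h + 1 = h" "mb_colless k + mb_symmetries k + 1 = k"
      using less.IH hk by auto
    then show ?thesis
      using mb_colless_split[of h k] mb_symmetries_split[of h k] hk by auto
  qed simp
qed

lemma leaves_pos: "1 \<le> leaves T"
  by (induction T) auto

lemma mb_colless_le_colless: "mb_colless (leaves T) \<le> colless T"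
proof (induction T)
  case (Node l r)
  then show ?case
    using mb_colless_add_le[of "leaves l" "leaves r"] by (auto split: if_splits)
qed simp

lemma colless_max_balanced: "max_balanced T \<Longrightarrow> colless T = mb_colless (leaves T)"
proof (induction T)
  case (Node l r)
  then show ?case
    using mb_colless_split[of "leaves l" "leaves r"] leaves_pos[of l] leaves_pos[of r] by simp
qed simp

lemma colless_le_square: "colless T \<le> leaves T * leaves T"
proof (induction T)
  case (Node l r)
  have "leaves l \<le> leaves l * leaves r" "leaves r \<le> leaves l * leaves r"
    using leaves_pos[of l] leaves_pos[of r] by simp_all
  then have "(if leaves r \<le> leaves l then leaves l - leaves r else leaves r - leaves l)
      \<le> 2 * (leaves l * leaves r)"
    by (split if_split) linarith
  then show ?case
    using Node by (simp add: algebra_simps)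
qed simp

lemma c_eq_colless_max_balanced:
  assumes "max_balanced T"
  shows "c (leaves T) = colless T"
  unfolding c_def
proof (rule Min_eqI)
  show "finite {colless T' |T'. leaves T' = leaves T}"
    by (rule finite_subset[of _ "{..leaves T * leaves T}"])
      (auto intro: order.trans[OF colless_le_square])
  show "colless T \<le> x" if "x \<in> {colless T' |T'. leaves T' = leaves T}" for x
    using that by (auto simp: colless_max_balanced[OF assms]) (metis mb_colless_le_colless)
qed auto

definition isomorphisms :: "btree \<Rightarrow> btree \<Rightarrow> (bool list \<Rightarrow> bool list) set" where
  "isomorphisms T S = {f. bij_betw f (nodes T) (nodes S) \<and> (\<forall>x. x \<notin> nodes T \<longrightarrow> f x = x) \<and>
      (\<forall>p\<in>nodes T. \<forall>q\<in>nodes T. edge T p q \<longleftrightarrow> edge S (f p) (f q))}"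

lemma automorphisms_eq_isomorphisms: "automorphisms T = isomorphisms T T"
  by (simp add: automorphisms_def isomorphisms_def)

lemma isomorphisms_iff:
  "f \<in> isomorphisms T S \<longleftrightarrow> bij_betw f (nodes T) (nodes S) \<and> (\<forall>x. x \<notin> nodes T \<longrightarrow> f x = x) \<and>
     (\<forall>p\<in>nodes T. \<forall>q\<in>nodes T. (\<exists>b. q = p @ [b]) \<longleftrightarrow> (\<exists>b. f q = f p @ [b]))"
proof (cases "bij_betw f (nodes T) (nodes S)")
  case True
  then have "(edge T p q \<longleftrightarrow> edge S (f p) (f q)) \<longleftrightarrow>
      ((\<exists>b. q = p @ [b]) \<longleftrightarrow> (\<exists>b. f q = f p @ [b]))" if "p \<in> nodes T" "q \<in> nodes T" for p q
    using that by (simp add: edge_def bij_betw_apply)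
  then show ?thesis
    unfolding isomorphisms_def mem_Collect_eq by (simp cong: ball_cong)
qed (simp add: isomorphisms_def)

lemma isomorphismsD:
  assumes "f \<in> isomorphisms T S"
  shows "bij_betw f (nodes T) (nodes S)" "\<And>x. x \<notin> nodes T \<Longrightarrow> f x = x"
    "\<And>p q. p \<in> nodes T \<Longrightarrow> q \<in> nodes T \<Longrightarrow> (\<exists>b. q = p @ [b]) \<longleftrightarrow> (\<exists>b. f q = f p @ [b])"
  using assms unfolding isomorphisms_iff by metis+

lemma isomorphismsI:
  assumes "bij_betw f (nodes T) (nodes S)" "\<And>x. x \<notin> nodes T \<Longrightarrow> f x = x"
    "\<And>p q. p \<in> nodes T \<Longrightarrow> q \<in> nodes T \<Longrightarrow> (\<exists>b. q = p @ [b]) \<longleftrightarrow> (\<exists>b. f q = f p @ [b])"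
  shows "f \<in> isomorphisms T S"
  unfolding isomorphisms_iff using assms by simp

lemma Nil_in_nodes [simp]: "[] \<in> nodes T"
  by (cases T) auto

lemma nodes_prefix_closed: "p @ q \<in> nodes T \<Longrightarrow> p \<in> nodes T"
proof (induction T arbitrary: p)
  case (Node l r)
  then show ?case
    by (cases p) auto
qed simp

fun subtree :: "btree \<Rightarrow> bool \<Rightarrow> btree" where
  "subtree Leaf d = Leaf"
| "subtree (Node l r) d = (if d then r else l)"

lemma Cons_in_nodes_iff: "T \<noteq> Leaf \<Longrightarrow> d # p \<in> nodes T \<longleftrightarrow> p \<in> nodes (subtree T d)"
  by (cases T) auto

lemma iso_Nil:
  assumes "f \<in> isomorphisms T S"
  shows "f [] = []"
proof (rule ccontr)
  assume "f [] \<noteq> []"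
  then obtain u b where fu: "f [] = u @ [b]"
    by (cases "f []" rule: rev_exhaust) auto
  have "u @ [b] \<in> nodes S"
    using bij_betw_apply[OF isomorphismsD(1)[OF assms] Nil_in_nodes] fu by simp
  then have "u \<in> f ` nodes T"
    using nodes_prefix_closed bij_betw_imp_surj_on[OF isomorphismsD(1)[OF assms]] by blast
  then obtain x where x: "x \<in> nodes T" "f x = u"
    by auto
  then have "\<exists>b'. f [] = f x @ [b']"
    using fu by simp
  then show False
    using isomorphismsD(3)[OF assms x(1) Nil_in_nodes] by simp
qed

lemma iso_snoc:
  assumes "f \<in> isomorphisms T S" "p @ [b] \<in> nodes T"
  shows "\<exists>b'. f (p @ [b]) = f p @ [b']"
  using isomorphismsD(3)[OF assms(1) nodes_prefix_closed[OF assms(2)] assms(2)] by blast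

lemma iso_Nil_iff:
  assumes "f \<in> isomorphisms T S" "p \<in> nodes T"
  shows "f p = [] \<longleftrightarrow> p = []"
proof
  assume "f p = []"
  then have "f p = f []"
    using iso_Nil[OF assms(1)] by simp
  then show "p = []"
    using inj_onD[OF bij_betw_imp_inj_on[OF isomorphismsD(1)[OF assms(1)]]] assms(2) Nil_in_nodes by blast
qed (simp add: iso_Nil[OF assms(1)])

lemma iso_Cons:
  assumes "f \<in> isomorphisms T S" "d # p \<in> nodes T"
  shows "\<exists>q. f (d # p) = f [d] @ q"
  using assms(2)
proof (induction p rule: rev_induct)
  case (snoc b p)
  have "d # p \<in> nodes T"
    using snoc.prems nodes_prefix_closed[of "d # p" "[b]"] by simp
  then obtain q where "f (d # p) = f [d] @ q"
    using snoc.IH by blast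
  moreover obtain b' where "f (d # p @ [b]) = f (d # p) @ [b']"
    using iso_snoc[OF assms(1), of "d # p" b] snoc.prems by auto
  ultimately show ?case
    by simp
qed simp

lemma iso_singleton:
  assumes "f \<in> isomorphisms T S" "[d] \<in> nodes T"
  shows "\<exists>b. f [d] = [b]"
  using iso_snoc[OF assms(1), of "[]" d] assms(2) iso_Nil[OF assms(1)] by simp

definition branch_map :: "btree \<Rightarrow> (bool list \<Rightarrow> bool list) \<Rightarrow> bool \<Rightarrow> bool list \<Rightarrow> bool list" where
  "branch_map T f d p = (if p \<in> nodes (subtree T d) then tl (f (d # p)) else p)"

definition glue :: "btree \<Rightarrow> bool \<Rightarrow> (bool \<Rightarrow> bool list \<Rightarrow> bool list) \<Rightarrow> bool list \<Rightarrow> bool list" where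
  "glue T \<beta> G x = (case x of [] \<Rightarrow> []
     | d # p \<Rightarrow> if p \<in> nodes (subtree T d) then (d \<noteq> \<beta>) # G d p else x)"

text \<open>\<open>\<beta>\<close> records whether the isomorphism swaps the two children of the root.\<close>

definition iso_swap :: "btree \<Rightarrow> btree \<Rightarrow> bool \<Rightarrow> (bool list \<Rightarrow> bool list) set" where
  "iso_swap T S \<beta> = {f \<in> isomorphisms T S. f [False] = [\<beta>]}"

lemma glue_Cons: "p \<in> nodes (subtree T d) \<Longrightarrow> glue T \<beta> G (d # p) = (d \<noteq> \<beta>) # G d p"
  by (simp add: glue_def)

context
  fixes T S :: btree
  assumes T_Node: "T \<noteq> Leaf" and S_Node: "S \<noteq> Leaf"
begin

lemma iso_swap_singleton:
  assumes "f \<in> iso_swap T S \<beta>"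
  shows "f [d] = [d \<noteq> \<beta>]"
proof -
  have f: "f \<in> isomorphisms T S" "f [False] = [\<beta>]"
    using assms by (auto simp: iso_swap_def)
  have children: "[True] \<in> nodes T" "[False] \<in> nodes T"
    using T_Node by (auto simp: Cons_in_nodes_iff)
  obtain b where "f [True] = [b]"
    using iso_singleton[OF f(1) children(1)] by blast
  moreover have "f [True] \<noteq> f [False]"
    using inj_onD[OF bij_betw_imp_inj_on[OF isomorphismsD(1)[OF f(1)]] _ children] by blast
  ultimately show ?thesis
    using f(2) by (cases d) auto
qed

lemma iso_swap_Cons:
  assumes "f \<in> iso_swap T S \<beta>" "p \<in> nodes (subtree T d)"
  shows "f (d # p) = (d \<noteq> \<beta>) # branch_map T f d p"
proof -
  have "d # p \<in> nodes T"
    using assms(2) T_Node by (simp add: Cons_in_nodes_iff)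
  then obtain q where "f (d # p) = f [d] @ q"
    using iso_Cons[of f T S d p] assms(1) by (auto simp: iso_swap_def)
  then show ?thesis
    using iso_swap_singleton[OF assms(1)] assms(2) by (simp add: branch_map_def)
qed

lemma branch_map_iso:
  assumes "f \<in> iso_swap T S \<beta>"
  shows "branch_map T f d \<in> isomorphisms (subtree T d) (subtree S (d \<noteq> \<beta>))"
proof -
  let ?g = "branch_map T f d"
  have f: "f \<in> isomorphisms T S"
    using assms by (auto simp: iso_swap_def)
  have f_Cons: "\<And>p. p \<in> nodes (subtree T d) \<Longrightarrow> f (d # p) = (d \<noteq> \<beta>) # ?g p"
    using iso_swap_Cons[OF assms] by blast
  have in_T: "\<And>p. d # p \<in> nodes T \<longleftrightarrow> p \<in> nodes (subtree T d)"
    using T_Node by (simp add: Cons_in_nodes_iff)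
  have in_S: "\<And>q. (d \<noteq> \<beta>) # q \<in> nodes S \<longleftrightarrow> q \<in> nodes (subtree S (d \<noteq> \<beta>))"
    using S_Node by (simp add: Cons_in_nodes_iff)
  have inj: "inj_on f (nodes T)" and onto: "f ` nodes T = nodes S"
    using isomorphismsD(1)[OF f] by (auto simp: bij_betw_def)
  have g_inj: "inj_on ?g (nodes (subtree T d))"
  proof (rule inj_onI)
    fix p q
    assume "p \<in> nodes (subtree T d)" "q \<in> nodes (subtree T d)" "?g p = ?g q"
    then show "p = q"
      using inj_onD[OF inj, of "d # p" "d # q"] f_Cons in_T by auto
  qed
  have g_onto: "?g ` nodes (subtree T d) = nodes (subtree S (d \<noteq> \<beta>))"
  proof (intro equalityI subsetI)
    fix y
    assume "y \<in> ?g ` nodes (subtree T d)"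
    then obtain p where p: "p \<in> nodes (subtree T d)" "y = ?g p"
      by blast
    then have "d # p \<in> nodes T"
      using in_T by simp
    then have "f (d # p) \<in> nodes S"
      using onto by blast
    then show "y \<in> nodes (subtree S (d \<noteq> \<beta>))"
      using f_Cons[OF p(1)] p(2) in_S by simp
  next
    fix q
    assume "q \<in> nodes (subtree S (d \<noteq> \<beta>))"
    then have "(d \<noteq> \<beta>) # q \<in> f ` nodes T"
      using onto in_S by simp
    then obtain x where x: "x \<in> nodes T" "f x = (d \<noteq> \<beta>) # q"
      by auto
    then obtain e p where x_eq: "x = e # p"
      using iso_Nil[OF f] by (cases x) auto
    then have p: "p \<in> nodes (subtree T e)"
      using x(1) T_Node by (simp add: Cons_in_nodes_iff)
    then have "e = d" "branch_map T f e p = q"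
      using iso_swap_Cons[OF assms p] x(2) x_eq by auto
    then show "q \<in> ?g ` nodes (subtree T d)"
      using p by blast
  qed
  show ?thesis
  proof (rule isomorphismsI)
    show "bij_betw ?g (nodes (subtree T d)) (nodes (subtree S (d \<noteq> \<beta>)))"
      using g_inj g_onto by (simp add: bij_betw_def)
    show "(\<exists>b. q = p @ [b]) \<longleftrightarrow> (\<exists>b. ?g q = ?g p @ [b])"
      if "p \<in> nodes (subtree T d)" "q \<in> nodes (subtree T d)" for p q
      using isomorphismsD(3)[OF f, of "d # p" "d # q"] f_Cons[OF that(1)] f_Cons[OF that(2)] that in_T
      by simp
  qed (simp add: branch_map_def)
qed

lemma glue_iso_swap:
  assumes G: "\<And>d. G d \<in> isomorphisms (subtree T d) (subtree S (d \<noteq> \<beta>))"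
  shows "glue T \<beta> G \<in> iso_swap T S \<beta>"
proof -
  let ?f = "glue T \<beta> G"
  have f_Nil: "?f [] = []"
    by (simp add: glue_def)
  have in_T: "\<And>d p. d # p \<in> nodes T \<longleftrightarrow> p \<in> nodes (subtree T d)"
    using T_Node by (simp add: Cons_in_nodes_iff)
  have in_S: "\<And>d q. d # q \<in> nodes S \<longleftrightarrow> q \<in> nodes (subtree S d)"
    using S_Node by (simp add: Cons_in_nodes_iff)
  have G_inj: "\<And>d. inj_on (G d) (nodes (subtree T d))"
    using isomorphismsD(1)[OF G] by (rule bij_betw_imp_inj_on)
  have G_onto: "\<And>d. G d ` nodes (subtree T d) = nodes (subtree S (d \<noteq> \<beta>))"
    using isomorphismsD(1)[OF G] by (rule bij_betw_imp_surj_on)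
  have f_inj: "inj_on ?f (nodes T)"
  proof (rule inj_onI)
    fix x y
    assume x: "x \<in> nodes T" and y: "y \<in> nodes T" and eq: "?f x = ?f y"
    show "x = y"
    proof (cases x)
      case Nil
      then show ?thesis
        using eq y by (cases y) (auto simp: f_Nil glue_Cons in_T)
    next
      case x_Cons: (Cons d p)
      then have p: "p \<in> nodes (subtree T d)"
        using x in_T by simp
      show ?thesis
      proof (cases y)
        case Nil
        then show ?thesis
          using eq x_Cons p by (simp add: f_Nil glue_Cons)
      next
        case (Cons e q)
        then have q: "q \<in> nodes (subtree T e)"
          using y in_T by simp
        have "d = e" "G d p = G e q"
          using eq x_Cons Cons glue_Cons[OF p] glue_Cons[OF q] by auto
        then show ?thesis
          using inj_onD[OF G_inj] p q x_Cons Cons by simp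
      qed
    qed
  qed
  have f_onto: "?f ` nodes T = nodes S"
  proof (intro equalityI subsetI)
    fix y
    assume "y \<in> ?f ` nodes T"
    then obtain x where x: "x \<in> nodes T" "y = ?f x"
      by blast
    show "y \<in> nodes S"
    proof (cases x)
      case Nil
      then show ?thesis
        using x f_Nil by simp
    next
      case (Cons d p)
      then have "p \<in> nodes (subtree T d)"
        using x in_T by simp
      then show ?thesis
        using x Cons bij_betw_apply[OF isomorphismsD(1)[OF G]] by (simp add: glue_Cons in_S)
    qed
  next
    fix y
    assume y: "y \<in> nodes S"
    show "y \<in> ?f ` nodes T"
    proof (cases y)
      case Nil
      then show ?thesis
        using f_Nil by (intro rev_image_eqI[of "[]"]) simp_all
    next
      case (Cons e q)
      define d where "d = (e \<noteq> \<beta>)"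
      have e: "e = (d \<noteq> \<beta>)"
        by (auto simp: d_def)
      have "q \<in> G d ` nodes (subtree T d)"
        using y Cons in_S e G_onto by simp
      then obtain p where p: "p \<in> nodes (subtree T d)" "G d p = q"
        by auto
      then show ?thesis
        using Cons e by (intro rev_image_eqI[of "d # p"]) (simp_all add: in_T glue_Cons)
    qed
  qed
  have f_child: "(\<exists>b. y = x @ [b]) \<longleftrightarrow> (\<exists>b. ?f y = ?f x @ [b])"
    if x: "x \<in> nodes T" and y: "y \<in> nodes T" for x y
  proof (cases y)
    case Nil
    then show ?thesis
      using x by (cases x) (auto simp: f_Nil glue_Cons in_T)
  next
    case (Cons e q)
    then have q: "q \<in> nodes (subtree T e)"
      using y in_T by simp
    show ?thesis
    proof (cases x)
      case Nil
      then show ?thesis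
        using Cons iso_Nil_iff[OF G q] by (simp add: f_Nil glue_Cons[OF q])
    next
      case x_Cons: (Cons d p)
      then have p: "p \<in> nodes (subtree T d)"
        using x in_T by simp
      show ?thesis
      proof (cases "d = e")
        case True
        then have "q \<in> nodes (subtree T d)"
          using q by simp
        then show ?thesis
          using True Cons x_Cons isomorphismsD(3)[OF G p] glue_Cons[OF p] glue_Cons[OF q] by simp
      next
        case False
        then show ?thesis
          using Cons x_Cons glue_Cons[OF p] glue_Cons[OF q] by auto
      qed
    qed
  qed
  have "?f \<in> isomorphisms T S"
  proof (rule isomorphismsI)
    show "bij_betw ?f (nodes T) (nodes S)"
      using f_inj f_onto by (simp add: bij_betw_def)
    show "?f x = x" if "x \<notin> nodes T" for x
      using that by (cases x) (auto simp: glue_def in_T)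
  qed (rule f_child)
  moreover have "?f [False] = [\<beta>]"
    using glue_Cons[where p = "[]" and d = False] iso_Nil[OF G] by simp
  ultimately show ?thesis
    by (simp add: iso_swap_def)
qed

lemma glue_branch_map:
  assumes "f \<in> iso_swap T S \<beta>"
  shows "glue T \<beta> (branch_map T f) = f"
proof
  fix x
  have f: "f \<in> isomorphisms T S"
    using assms by (simp add: iso_swap_def)
  show "glue T \<beta> (branch_map T f) x = f x"
  proof (cases x)
    case Nil
    then show ?thesis
      using iso_Nil[OF f] by (simp add: glue_def)
  next
    case (Cons d p)
    show ?thesis
    proof (cases "p \<in> nodes (subtree T d)")
      case True
      then show ?thesis
        using Cons iso_swap_Cons[OF assms True] by (simp add: glue_Cons)
    next
      case False
      then have "x \<notin> nodes T"
        using Cons T_Node by (simp add: Cons_in_nodes_iff)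
      then show ?thesis
        using isomorphismsD(2)[OF f] False Cons by (simp add: glue_def)
    qed
  qed
qed

lemma branch_map_glue:
  assumes "\<And>d. G d \<in> isomorphisms (subtree T d) (subtree S (d \<noteq> \<beta>))"
  shows "branch_map T (glue T \<beta> G) = G"
proof (intro ext)
  fix d p
  show "branch_map T (glue T \<beta> G) d p = G d p"
    using isomorphismsD(2)[OF assms] by (simp add: branch_map_def glue_Cons)
qed

lemma iso_swap_bij:
  "bij_betw (branch_map T) (iso_swap T S \<beta>)
     (\<Pi>\<^sub>E d\<in>UNIV. isomorphisms (subtree T d) (subtree S (d \<noteq> \<beta>)))"
proof (rule bij_betw_byWitness[where f' = "glue T \<beta>"])
  show "\<forall>f\<in>iso_swap T S \<beta>. glue T \<beta> (branch_map T f) = f"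
    using glue_branch_map by blast
  show "\<forall>G\<in>\<Pi>\<^sub>E d\<in>UNIV. isomorphisms (subtree T d) (subtree S (d \<noteq> \<beta>)).
      branch_map T (glue T \<beta> G) = G"
  proof
    fix G
    assume "G \<in> (\<Pi>\<^sub>E d\<in>UNIV. isomorphisms (subtree T d) (subtree S (d \<noteq> \<beta>)))"
    then have "\<And>d. G d \<in> isomorphisms (subtree T d) (subtree S (d \<noteq> \<beta>))"
      by (simp add: PiE_UNIV_domain Pi_iff)
    then show "branch_map T (glue T \<beta> G) = G"
      by (rule branch_map_glue)
  qed
  show "branch_map T ` iso_swap T S \<beta> \<subseteq> (\<Pi>\<^sub>E d\<in>UNIV. isomorphisms (subtree T d) (subtree S (d \<noteq> \<beta>)))"
    using branch_map_iso by (auto simp: PiE_UNIV_domain)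
  show "glue T \<beta> ` (\<Pi>\<^sub>E d\<in>UNIV. isomorphisms (subtree T d) (subtree S (d \<noteq> \<beta>))) \<subseteq> iso_swap T S \<beta>"
    using glue_iso_swap by (auto simp: PiE_UNIV_domain)
qed

lemma card_iso_swap:
  "card (iso_swap T S \<beta>) =
     card (isomorphisms (subtree T False) (subtree S \<beta>)) *
     card (isomorphisms (subtree T True) (subtree S (\<not> \<beta>)))"
  using bij_betw_same_card[OF iso_swap_bij] by (simp add: card_PiE UNIV_bool)

lemma isomorphisms_eq_iso_swap_Un: "isomorphisms T S = iso_swap T S False \<union> iso_swap T S True"
proof (intro equalityI subsetI)
  fix f
  assume f: "f \<in> isomorphisms T S"
  moreover have "[False] \<in> nodes T"
    using T_Node by (simp add: Cons_in_nodes_iff)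
  ultimately obtain b where "f [False] = [b]"
    using iso_singleton by blast
  with f show "f \<in> iso_swap T S False \<union> iso_swap T S True"
    by (cases b) (auto simp: iso_swap_def)
qed (auto simp: iso_swap_def)

end

lemma finite_nodes: "finite (nodes T)"
  by (induction T) auto

lemma finite_isomorphisms: "finite (isomorphisms T S)"
proof (rule inj_on_finite[of "\<lambda>f. restrict f (nodes T)" _ "nodes T \<rightarrow>\<^sub>E nodes S"])
  show "inj_on (\<lambda>f. restrict f (nodes T)) (isomorphisms T S)"
  proof (rule inj_onI)
    fix f g
    assume f: "f \<in> isomorphisms T S" and g: "g \<in> isomorphisms T S"
      and eq: "restrict f (nodes T) = restrict g (nodes T)"
    show "f = g"
    proof
      fix x
      show "f x = g x"
        using fun_cong[OF eq, of x] isomorphismsD(2)[OF f, of x] isomorphismsD(2)[OF g, of x]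
        by (cases "x \<in> nodes T") auto
    qed
  qed
  show "(\<lambda>f. restrict f (nodes T)) ` isomorphisms T S \<subseteq> nodes T \<rightarrow>\<^sub>E nodes S"
    by (auto intro: bij_betw_apply[OF isomorphismsD(1)])
qed (simp add: finite_PiE finite_nodes)

lemma isomorphism_imp_card_nodes_eq: "f \<in> isomorphisms T S \<Longrightarrow> card (nodes T) = card (nodes S)"
  using isomorphismsD(1) by (rule bij_betw_same_card)

lemma card_nodes_Node: "2 \<le> card (nodes (Node l r))"
proof -
  have "{[], [False]} \<subseteq> nodes (Node l r)"
    by auto
  from card_mono[OF finite_nodes this] show ?thesis
    by simp
qed

lemma isomorphisms_Leaf_Leaf: "isomorphisms Leaf Leaf = {id}"
proof (intro equalityI subsetI)
  fix f
  assume f: "f \<in> isomorphisms Leaf Leaf"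
  have "f x = x" for x
    using iso_Nil[OF f] isomorphismsD(2)[OF f, of x] by (cases "x = []") auto
  then show "f \<in> {id}"
    by auto
qed (auto intro: isomorphismsI)

lemma isomorphisms_Leaf_Node: "isomorphisms Leaf (Node l r) = {}"
  using isomorphism_imp_card_nodes_eq[of _ Leaf "Node l r"] card_nodes_Node[of l r]
  by (auto simp del: nodes.simps(2))

lemma isomorphisms_Node_Leaf: "isomorphisms (Node l r) Leaf = {}"
  using isomorphism_imp_card_nodes_eq[of _ "Node l r" Leaf] card_nodes_Node[of l r]
  by (auto simp del: nodes.simps(2))

lemma card_isomorphisms_Node:
  "card (isomorphisms (Node l1 r1) (Node l2 r2)) =
     card (isomorphisms l1 l2) * card (isomorphisms r1 r2) +
     card (isomorphisms l1 r2) * card (isomorphisms r1 l2)"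
proof -
  let ?T = "Node l1 r1" and ?S = "Node l2 r2"
  have finite_swap: "finite (iso_swap ?T ?S \<beta>)" for \<beta>
    using finite_isomorphisms by (rule rev_finite_subset) (auto simp: iso_swap_def)
  have "iso_swap ?T ?S False \<inter> iso_swap ?T ?S True = {}"
    by (auto simp: iso_swap_def)
  then have "card (isomorphisms ?T ?S) = card (iso_swap ?T ?S False) + card (iso_swap ?T ?S True)"
    using isomorphisms_eq_iso_swap_Un[of ?T ?S] card_Un_disjoint[OF finite_swap finite_swap]
    by simp
  then show ?thesis
    by (simp add: card_iso_swap)
qed

lemma card_isomorphisms_eq_0: "leaves T \<noteq> leaves S \<Longrightarrow> card (isomorphisms T S) = 0"
proof (induction T arbitrary: S)
  case Leaf
  then show ?case
    by (cases S) (simp_all add: isomorphisms_Leaf_Node)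
next
  case (Node l1 r1)
  show ?case
  proof (cases S)
    case Leaf
    then show ?thesis
      by (simp add: isomorphisms_Node_Leaf)
  next
    case S_Node: (Node l2 r2)
    have straight: "card (isomorphisms l1 l2) * card (isomorphisms r1 r2) = 0"
    proof (cases "leaves l1 = leaves l2")
      case True
      then have "leaves r1 \<noteq> leaves r2"
        using Node.prems S_Node by simp
      then show ?thesis
        using Node.IH(2) by simp
    qed (simp add: Node.IH(1))
    have crossed: "card (isomorphisms l1 r2) * card (isomorphisms r1 l2) = 0"
    proof (cases "leaves l1 = leaves r2")
      case True
      then have "leaves r1 \<noteq> leaves l2"
        using Node.prems S_Node by simp
      then show ?thesis
        using Node.IH(2) by simp
    qed (simp add: Node.IH(1))
    show ?thesis
      using straight crossed S_Node by (simp add: card_isomorphisms_Node)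
  qed
qed

lemma leaves_eq_1_iff: "leaves T = 1 \<longleftrightarrow> T = Leaf"
proof (cases T)
  case (Node l r)
  then show ?thesis
    using leaves_pos[of l] leaves_pos[of r] by simp
qed simp

lemma card_isomorphisms_max_balanced:
  "max_balanced T \<Longrightarrow> max_balanced S \<Longrightarrow> leaves T = leaves S \<Longrightarrow>
     card (isomorphisms T S) = 2 ^ mb_symmetries (leaves T)"
proof (induction T arbitrary: S)
  case Leaf
  then have "S = Leaf"
    using leaves_eq_1_iff[of S] by simp
  then show ?case
    by (simp add: isomorphisms_Leaf_Leaf)
next
  case (Node l1 r1)
  obtain l2 r2 where S: "S = Node l2 r2"
    using Node.prems leaves_eq_1_iff[of S] leaves_pos[of l1] leaves_pos[of r1] by (cases S) auto
  define a1 b1 a2 b2 where "a1 = leaves l1" "b1 = leaves r1" "a2 = leaves l2" "b2 = leaves r2"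
  have balanced: "a1 + b1 = a2 + b2" "1 \<le> a1" "1 \<le> b1" "a1 \<le> b1 + 1" "b1 \<le> a1 + 1"
    "a2 \<le> b2 + 1" "b2 \<le> a2 + 1"
    using Node.prems S leaves_pos unfolding a1_b1_a2_b2_def by auto
  have card_l1: "card (isomorphisms l1 X) = (if a1 = leaves X then 2 ^ mb_symmetries a1 else 0)"
    and card_r1: "card (isomorphisms r1 X) = (if b1 = leaves X then 2 ^ mb_symmetries b1 else 0)"
    if "X \<in> {l2, r2}" for X
  proof -
    have "max_balanced l1" "max_balanced r1" "max_balanced X"
      using that Node.prems S by auto
    then show "card (isomorphisms l1 X) = (if a1 = leaves X then 2 ^ mb_symmetries a1 else 0)"
      "card (isomorphisms r1 X) = (if b1 = leaves X then 2 ^ mb_symmetries b1 else 0)"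
      using Node.IH[of X] card_isomorphisms_eq_0[of l1 X] card_isomorphisms_eq_0[of r1 X]
      unfolding a1_b1_a2_b2_def by auto
  qed
  have symmetries:
    "mb_symmetries (a1 + b1) = mb_symmetries a1 + mb_symmetries b1 + (if a1 = b1 then 1 else 0)"
    using mb_symmetries_split[of a1 b1] balanced(2-5) by simp
  have "card (isomorphisms (Node l1 r1) S) =
      card (isomorphisms l1 l2) * card (isomorphisms r1 r2) +
      card (isomorphisms l1 r2) * card (isomorphisms r1 l2)"
    unfolding S by (rule card_isomorphisms_Node)
  also have "\<dots> = 2 ^ mb_symmetries (a1 + b1)"
  proof -
    have "(a2 = a1 \<and> b2 = b1) \<or> (a2 = b1 \<and> b2 = a1)"
      using balanced by arith
    then show ?thesis
    proof
      assume "a2 = a1 \<and> b2 = b1"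
      then show ?thesis
        using card_l1[of l2] card_l1[of r2] card_r1[of l2] card_r1[of r2] symmetries
        by (cases "a1 = b1") (simp_all add: a1_b1_a2_b2_def[symmetric] power_add)
    next
      assume "a2 = b1 \<and> b2 = a1"
      then show ?thesis
        using card_l1[of l2] card_l1[of r2] card_r1[of l2] card_r1[of r2] symmetries
        by (cases "a1 = b1") (simp_all add: a1_b1_a2_b2_def[symmetric] power_add)
    qed
  qed
  finally show ?case
    by (simp add: a1_b1_a2_b2_def)
qed

theorem corollary2:
  fixes n :: nat and T :: btree
  assumes "n \<ge> 1" and "leaves T = n" and "max_balanced T"
  shows "real (c n) = real n - 1 - log 2 (real (card (automorphisms T)))"
proof -
  have "card (automorphisms T) = 2 ^ mb_symmetries n"
    using card_isomorphisms_max_balanced[OF assms(3) assms(3)] assms(2)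
    by (simp add: automorphisms_eq_isomorphisms)
  then have "log 2 (real (card (automorphisms T))) = mb_symmetries n"
    by (simp add: log_nat_power)
  moreover have "c n = mb_colless n"
    using c_eq_colless_max_balanced[OF assms(3)] colless_max_balanced[OF assms(3)] assms(2)
    by simp
  moreover have "mb_colless n + mb_symmetries n + 1 = n"
    using mb_colless_add_mb_symmetries[OF assms(1)] .
  ultimately show ?thesis
    by simp
qed

end
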